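(* Let $M$ and $N$ be finite groups. (1) If $M$ and $N$ are both nonabelian, then $K(M\times N)=1$. (2) If $M$ is nonabelian and $N$ is abelian, then $K(M\times N)=K(M)$.
   Context: For $\chi\in\mathrm{Irr}(G)$, the center of $\chi$ is $Z(\chi)=\{g\in G : |\chi(g)|=\chi(1)\}$. For a nonabelian group $G$, let $\mathcal{X}_G=\{\chi\in\mathrm{Irr}(G) : Z(\chi)>Z(G)\}$ (strict containment) and define $K(G)=\bigcap_{\chi\in\mathcal{X}_G}\ker(\chi)$; if $G$ is abelian, set $K(G)=G$. *)

theory Defs
  imports "HOL-Algebra.Group" "Jordan_Normal_Form.Matrix"
begin

definition mat_trace :: "complex mat \<Rightarrow> complex" where
  "mat_trace A = (\<Sum>i<dim_row A. A $$ (i, i))"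

definition is_rep :: "('a, 'b) monoid_scheme \<Rightarrow> nat \<Rightarrow> ('a \<Rightarrow> complex mat) \<Rightarrow> bool" where
  "is_rep G n \<rho> \<longleftrightarrow>
     (\<forall>g\<in>carrier G. \<rho> g \<in> carrier_mat n n) \<and>
     \<rho> \<one>\<^bsub>G\<^esub> = 1\<^sub>m n \<and>
     (\<forall>g\<in>carrier G. \<forall>h\<in>carrier G. \<rho> (g \<otimes>\<^bsub>G\<^esub> h) = \<rho> g * \<rho> h)"

definition is_subspace :: "nat \<Rightarrow> complex vec set \<Rightarrow> bool" where
  "is_subspace n W \<longleftrightarrow> W \<subseteq> carrier_vec n \<and> 0\<^sub>v n \<in> W \<and>
     (\<forall>v\<in>W. \<forall>w\<in>W. v + w \<in> W) \<and> (\<forall>c. \<forall>v\<in>W. c \<cdot>\<^sub>v v \<in> W)"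

definition is_irr_rep :: "('a, 'b) monoid_scheme \<Rightarrow> nat \<Rightarrow> ('a \<Rightarrow> complex mat) \<Rightarrow> bool" where
  "is_irr_rep G n \<rho> \<longleftrightarrow> is_rep G n \<rho> \<and> n > 0 \<and>
     (\<forall>W. is_subspace n W \<and> (\<forall>g\<in>carrier G. \<forall>w\<in>W. \<rho> g *\<^sub>v w \<in> W) \<longrightarrow>
          W = {0\<^sub>v n} \<or> W = carrier_vec n)"

definition character_of :: "('a, 'b) monoid_scheme \<Rightarrow> ('a \<Rightarrow> complex mat) \<Rightarrow> 'a \<Rightarrow> complex" where
  "character_of G \<rho> = (\<lambda>g. if g \<in> carrier G then mat_trace (\<rho> g) else 0)"

definition Irr :: "('a, 'b) monoid_scheme \<Rightarrow> ('a \<Rightarrow> complex) set" where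
  "Irr G = {\<chi>. \<exists>n \<rho>. is_irr_rep G n \<rho> \<and> \<chi> = character_of G \<rho>}"

definition group_center :: "('a, 'b) monoid_scheme \<Rightarrow> 'a set" where
  "group_center G = {z \<in> carrier G. \<forall>g\<in>carrier G. z \<otimes>\<^bsub>G\<^esub> g = g \<otimes>\<^bsub>G\<^esub> z}"

definition char_center :: "('a, 'b) monoid_scheme \<Rightarrow> ('a \<Rightarrow> complex) \<Rightarrow> 'a set" where
  "char_center G \<chi> = {g \<in> carrier G. cmod (\<chi> g) = cmod (\<chi> \<one>\<^bsub>G\<^esub>)}"

definition char_kernel :: "('a, 'b) monoid_scheme \<Rightarrow> ('a \<Rightarrow> complex) \<Rightarrow> 'a set" where
  "char_kernel G \<chi> = {g \<in> carrier G. \<chi> g = \<chi> \<one>\<^bsub>G\<^esub>}"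

definition X_set :: "('a, 'b) monoid_scheme \<Rightarrow> ('a \<Rightarrow> complex) set" where
  "X_set G = {\<chi> \<in> Irr G. group_center G \<subset> char_center G \<chi>}"

definition K_grp :: "('a, 'b) monoid_scheme \<Rightarrow> 'a set" where
  "K_grp G = (if comm_group G then carrier G
              else carrier G \<inter> (\<Inter>\<chi>\<in>X_set G. char_kernel G \<chi>))"

end

theory Submission
  imports Defs "Jordan_Normal_Form.Spectral_Radius" "HOL-Algebra.Multiplicative_Group"
begin

(*
  Two facts about a finite group H drive the proof. Irreducible characters separate the
  identity from every h \<noteq> 1: the regular representation has trace 0 at h, and splitting
  a reducible representation along an invariant subspace (block triangularisation after an
  adapted change of basis) passes a summand with trace \<noteq> degree at h down to an irreducible
  one. And by Schur's lemma a central element acts by a scalar of modulus one, so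
  Z(H) \<subseteq> Z(\<chi>) for every irreducible \<chi>.

  Hence, if f : G \<rightarrow> H is an epimorphism and some x \<in> ker f is not central in G, every
  inflation \<chi> \<circ> f lies in X_G, with x witnessing Z(G) < Z(\<chi> \<circ> f); so K(G) \<subseteq> ker f.
  For the two projections of M \<times> N this gives K(M \<times> N) \<subseteq> M \<times> 1 if M is nonabelian and
  K(M \<times> N) \<subseteq> 1 \<times> N if N is nonabelian. If N is abelian, each (1, b) is central in
  M \<times> N, so an irreducible \<rho> of M \<times> N satisfies \<rho>(a, b) = c(b) \<rho>(a, 1) with |c(b)| = 1.
  Then a \<mapsto> \<chi>(a, 1) is a character in X_M whenever \<chi> is in X_(M \<times> N), and conversely
  X_M inflates into X_(M \<times> N); this gives K(M \<times> N) = K(M) \<times> 1.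
*)

section \<open>Matrices\<close>

lemma mult_unit_vec_eq_col:
  fixes A :: "'a::semiring_1 mat"
  assumes "A \<in> carrier_mat n m" "j < m"
  shows "A *\<^sub>v unit_vec m j = col A j"
  using assms by (intro eq_vecI) (auto simp: row_def col_def)

lemma sum_lessThan_split:
  fixes f :: "nat \<Rightarrow> 'a::comm_monoid_add"
  assumes "k \<le> n"
  shows "(\<Sum>l<n. f l) = (\<Sum>l<k. f l) + (\<Sum>l<n - k. f (l + k))"
proof -
  have "(\<Sum>l<n. f l) = (\<Sum>l<k. f l) + (\<Sum>l\<in>{k..<n}. f l)"
    using sum.atLeastLessThan_concat[of 0 k n f] assms by (simp add: atLeast0LessThan)
  also have "(\<Sum>l\<in>{k..<n}. f l) = (\<Sum>l<n - k. f (l + k))"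
    using sum.shift_bounds_nat_ivl[of f 0 k "n - k"] assms by (simp add: atLeast0LessThan)
  finally show ?thesis .
qed

lemma index_mult_mat_sum:
  fixes A :: "'a::semiring_0 mat"
  assumes "A \<in> carrier_mat m n" "B \<in> carrier_mat n p" "i < m" "j < p"
  shows "(A * B) $$ (i, j) = (\<Sum>l<n. A $$ (i, l) * B $$ (l, j))"
  using assms by (simp add: scalar_prod_def atLeast0LessThan)

lemma smult_mult_mat_vec:
  fixes A :: "'a::comm_ring mat"
  assumes "A \<in> carrier_mat n m" "v \<in> carrier_vec m"
  shows "(c \<cdot>\<^sub>m A) *\<^sub>v v = c \<cdot>\<^sub>v (A *\<^sub>v v)"
  using assms by (intro eq_vecI) (auto simp: scalar_prod_def sum_distrib_left ac_simps)

lemma mult_conjugate_mat: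
  fixes A B P Q :: "'a::semiring_1 mat"
  assumes A: "A \<in> carrier_mat n n" and B: "B \<in> carrier_mat n n"
    and P: "P \<in> carrier_mat n n" and Q: "Q \<in> carrier_mat n n" and PQ: "P * Q = 1\<^sub>m n"
  shows "(Q * A * P) * (Q * B * P) = Q * (A * B) * P"
proof -
  have "(Q * A * P) * (Q * B * P) = Q * A * (P * Q) * B * P"
    using A B P Q by (simp add: assoc_mult_mat[of _ n n _ n _ n])
  also have "\<dots> = Q * (A * B) * P"
    using A B P Q PQ by (simp add: assoc_mult_mat[of _ n n _ n _ n])
  finally show ?thesis .
qed

lemma mat_trace_carrier: "A \<in> carrier_mat n n \<Longrightarrow> mat_trace A = (\<Sum>i<n. A $$ (i, i))"
  unfolding mat_trace_def by simp

lemma mat_trace_one [simp]: "mat_trace (1\<^sub>m n) = of_nat n"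
  unfolding mat_trace_def by simp

lemma mat_trace_smult: "A \<in> carrier_mat n n \<Longrightarrow> mat_trace (c \<cdot>\<^sub>m A) = c * mat_trace A"
  unfolding mat_trace_def by (simp add: sum_distrib_left)

lemma mat_trace_mult_comm:
  assumes A: "A \<in> carrier_mat n m" and B: "B \<in> carrier_mat m n"
  shows "mat_trace (A * B) = mat_trace (B * A)"
proof -
  have "mat_trace (A * B) = (\<Sum>i<n. \<Sum>l<m. A $$ (i, l) * B $$ (l, i))"
    using A B by (simp add: mat_trace_def scalar_prod_def atLeast0LessThan)
  also have "\<dots> = (\<Sum>l<m. \<Sum>i<n. B $$ (l, i) * A $$ (i, l))"
    by (subst sum.swap) (simp add: mult.commute)
  also have "\<dots> = mat_trace (B * A)"
    using A B by (simp add: mat_trace_def scalar_prod_def atLeast0LessThan)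
  finally show ?thesis .
qed

lemma mat_trace_similar:
  assumes A: "A \<in> carrier_mat n n" and P: "P \<in> carrier_mat n n" and Q: "Q \<in> carrier_mat n n"
    and PQ: "P * Q = 1\<^sub>m n"
  shows "mat_trace (Q * A * P) = mat_trace A"
proof -
  have "mat_trace (Q * A * P) = mat_trace (P * (Q * A))"
    using A P Q by (intro mat_trace_mult_comm) auto
  also have "P * (Q * A) = A"
    using A P Q PQ by (simp flip: assoc_mult_mat[of P n n Q n A n])
  finally show ?thesis .
qed

definition upper_left_block :: "'a mat \<Rightarrow> nat \<Rightarrow> 'a mat" where
  "upper_left_block A k = mat k k (\<lambda>(i, j). A $$ (i, j))"

definition lower_right_block :: "'a mat \<Rightarrow> nat \<Rightarrow> nat \<Rightarrow> 'a mat" where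
  "lower_right_block A k n = mat (n - k) (n - k) (\<lambda>(i, j). A $$ (i + k, j + k))"

definition block_upper_triangular :: "'a::zero mat \<Rightarrow> nat \<Rightarrow> nat \<Rightarrow> bool" where
  "block_upper_triangular A k n \<longleftrightarrow> (\<forall>i j. k \<le> i \<longrightarrow> i < n \<longrightarrow> j < k \<longrightarrow> A $$ (i, j) = 0)"

lemma block_upper_triangular_mult:
  fixes A B :: "'a::semiring_0 mat"
  assumes A: "A \<in> carrier_mat n n" and B: "B \<in> carrier_mat n n" and k: "k \<le> n"
    and tA: "block_upper_triangular A k n" and tB: "block_upper_triangular B k n"
  shows "upper_left_block (A * B) k = upper_left_block A k * upper_left_block B k"
    and "lower_right_block (A * B) k n = lower_right_block A k n * lower_right_block B k n"
    and "block_upper_triangular (A * B) k n"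
proof -
  have split: "(A * B) $$ (i, j) = (\<Sum>l<k. A $$ (i, l) * B $$ (l, j))
      + (\<Sum>l<n - k. A $$ (i, l + k) * B $$ (l + k, j))" if "i < n" "j < n" for i j
    using index_mult_mat_sum[OF A B that] sum_lessThan_split[OF k] by simp
  have left_zero: "(\<Sum>l<k. A $$ (i, l) * B $$ (l, j)) = 0" if "k \<le> i" "i < n" for i j
    using tA that by (intro sum.neutral) (auto simp: block_upper_triangular_def)
  have right_zero: "(\<Sum>l<n - k. A $$ (i, l + k) * B $$ (l + k, j)) = 0" if "j < k" for i j
    using tB that by (intro sum.neutral) (auto simp: block_upper_triangular_def)
  show "upper_left_block (A * B) k = upper_left_block A k * upper_left_block B k"
    by (rule eq_matI) (use k in \<open>auto simp: upper_left_block_def split right_zero scalar_prod_def atLeast0LessThan\<close>)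
  show "lower_right_block (A * B) k n = lower_right_block A k n * lower_right_block B k n"
    by (rule eq_matI) (use k in \<open>auto simp: lower_right_block_def split left_zero scalar_prod_def atLeast0LessThan\<close>)
  show "block_upper_triangular (A * B) k n"
    using split left_zero right_zero k by (auto simp: block_upper_triangular_def)
qed

lemma mat_trace_blocks:
  assumes A: "A \<in> carrier_mat n n" and k: "k \<le> n"
  shows "mat_trace A = mat_trace (upper_left_block A k) + mat_trace (lower_right_block A k n)"
  using sum_lessThan_split[OF k, of "\<lambda>i. A $$ (i, i)"] A
  by (simp add: mat_trace_def upper_left_block_def lower_right_block_def)

lemma is_subspace_carrier: "is_subspace n W \<Longrightarrow> w \<in> W \<Longrightarrow> w \<in> carrier_vec n"
  unfolding is_subspace_def by auto

lemma is_subspace_zero: "is_subspace n W \<Longrightarrow> 0\<^sub>v n \<in> W"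
  unfolding is_subspace_def by auto

lemma is_subspace_add: "is_subspace n W \<Longrightarrow> v \<in> W \<Longrightarrow> w \<in> W \<Longrightarrow> v + w \<in> W"
  unfolding is_subspace_def by auto

lemma is_subspace_smult: "is_subspace n W \<Longrightarrow> v \<in> W \<Longrightarrow> c \<cdot>\<^sub>v v \<in> W"
  unfolding is_subspace_def by auto

definition coord_subspace :: "nat \<Rightarrow> nat \<Rightarrow> complex vec set" where
  "coord_subspace k n = {v \<in> carrier_vec n. \<forall>j. k \<le> j \<longrightarrow> j < n \<longrightarrow> v $ j = 0}"

lemma invertible_mat_with_first_col:
  fixes w :: "complex vec"
  assumes w: "w \<in> carrier_vec n" and w0: "w \<noteq> 0\<^sub>v n"
  obtains P Q where "P \<in> carrier_mat n n" "Q \<in> carrier_mat n n" "P * Q = 1\<^sub>m n" "Q * P = 1\<^sub>m n"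
    "P *\<^sub>v unit_vec n 0 = w"
proof -
  interpret cof_vec_space n "TYPE(complex)" .
  define b where "b = basis_completion w"
  define ws where "ws = gram_schmidt n b"
  define P where "P = mat_of_cols n ws"
  define Q where "Q = corthogonal_inv P"
  from basis_completion[OF w w0, folded b_def]
  have b: "set b \<subseteq> carrier_vec n" "distinct b" "\<not> lin_dep (set b)" "hd b = w" "length b = n"
    by auto
  have n: "n > 0" using w w0 by (cases n) auto
  with b obtain vs where bv: "b = w # vs" by (cases b) auto
  from gram_schmidt_result[OF b(1-3) refl, folded ws_def]
  have ws: "set ws \<subseteq> carrier_vec n" "corthogonal ws" "length ws = n"
    by (auto simp: b(5))
  have P: "P \<in> carrier_mat n n"
    using ws mat_of_cols_carrier(1)[of n ws] unfolding P_def by simp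
  have Q: "Q \<in> carrier_mat n n"
    using P unfolding Q_def corthogonal_inv_def by (auto simp: mat_of_rows_def)
  have QP: "inverts_mat Q P"
    using corthogonal_inv_result[OF orthogonal_mat_of_cols[OF ws]] unfolding Q_def P_def .
  then have PQ: "inverts_mat P Q"
    using mat_mult_left_right_inverse[OF Q P] P Q unfolding inverts_mat_def by auto
  have "ws ! 0 = w"
    using gram_schmidt_hd[OF w, of vs, folded bv ws_def] ws n by (cases ws) auto
  then have "P *\<^sub>v unit_vec n 0 = w"
    using mult_unit_vec_eq_col[OF P n] ws n w unfolding P_def by simp
  with P Q PQ QP show thesis
    using that unfolding inverts_mat_def by auto
qed

lemma inverse_mats_mult:
  fixes P1 Q1 P2 Q2 :: "'a::semiring_1 mat"
  assumes "P1 \<in> carrier_mat n n" "Q1 \<in> carrier_mat n n" "P2 \<in> carrier_mat n n" "Q2 \<in> carrier_mat n n"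
    and "P1 * Q1 = 1\<^sub>m n" "P2 * Q2 = 1\<^sub>m n"
  shows "(P1 * P2) * (Q2 * Q1) = 1\<^sub>m n"
proof -
  have "(P1 * P2) * (Q2 * Q1) = P1 * (P2 * Q2) * Q1"
    using assms(1-4) by (simp add: assoc_mult_mat[of _ n n _ n _ n])
  then show ?thesis
    using assms by simp
qed

definition one_block :: "nat \<Rightarrow> 'a::comm_ring_1 mat \<Rightarrow> 'a mat" where
  "one_block n A = four_block_mat (1\<^sub>m 1) (0\<^sub>m 1 n) (0\<^sub>m n 1) A"

lemma one_block_carrier [simp]:
  "A \<in> carrier_mat n n \<Longrightarrow> one_block n A \<in> carrier_mat (Suc n) (Suc n)"
  unfolding one_block_def using four_block_carrier_mat[of "1\<^sub>m 1" 1 1 A n n] by simp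

lemma one_block_mult:
  "A \<in> carrier_mat n n \<Longrightarrow> B \<in> carrier_mat n n \<Longrightarrow> one_block n A * one_block n B = one_block n (A * B)"
  unfolding one_block_def by (subst mult_four_block_mat) auto

lemma one_block_one [simp]: "one_block n (1\<^sub>m n) = 1\<^sub>m (Suc n)"
  unfolding one_block_def using four_block_one_mat[of 1 n] by simp

lemma one_block_mult_vec:
  assumes "A \<in> carrier_mat n n" "v \<in> carrier_vec (Suc n)"
  shows "one_block n A *\<^sub>v v = vec_first v 1 @\<^sub>v (A *\<^sub>v vec_last v n)"
proof -
  have "v = vec_first v 1 @\<^sub>v vec_last v n"
    using assms(2) vec_first_last_append[of v 1 n] by simp
  then have "one_block n A *\<^sub>v v = one_block n A *\<^sub>v (vec_first v 1 @\<^sub>v vec_last v n)"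
    by simp
  also have "\<dots> = vec_first v 1 @\<^sub>v (A *\<^sub>v vec_last v n)"
    unfolding one_block_def using assms by (subst four_block_mat_mult_vec) auto
  finally show ?thesis .
qed

definition adapted_change_of_basis ::
    "complex vec set \<Rightarrow> nat \<Rightarrow> nat \<Rightarrow> complex mat \<Rightarrow> complex mat \<Rightarrow> bool" where
  "adapted_change_of_basis W k n P Q \<longleftrightarrow> k \<le> n \<and>
     P \<in> carrier_mat n n \<and> Q \<in> carrier_mat n n \<and> P * Q = 1\<^sub>m n \<and> Q * P = 1\<^sub>m n \<and>
     (\<forall>w\<in>W. Q *\<^sub>v w \<in> coord_subspace k n) \<and> (\<forall>v\<in>coord_subspace k n. P *\<^sub>v v \<in> W)"

lemma adapted_change_of_basis_zero:
  assumes W: "is_subspace n W" and W0: "W \<subseteq> {0\<^sub>v n}"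
  shows "adapted_change_of_basis W 0 n (1\<^sub>m n) (1\<^sub>m n)"
proof -
  have coord_zero: "v = 0\<^sub>v n" if "v \<in> coord_subspace 0 n" for v
    using that by (intro eq_vecI) (auto simp: coord_subspace_def)
  have "0\<^sub>v n \<in> coord_subspace 0 n"
    by (simp add: coord_subspace_def)
  then show ?thesis
    unfolding adapted_change_of_basis_def
    using W0 is_subspace_zero[OF W] by (auto dest: coord_zero)
qed

lemma is_subspace_tail_image:
  assumes W: "is_subspace (Suc n) W" and Q: "Q \<in> carrier_mat (Suc n) (Suc n)"
  shows "is_subspace n ((\<lambda>u. vec_last (Q *\<^sub>v u) n) ` W)"
proof -
  have add: "vec_last (Q *\<^sub>v (u + u')) n = vec_last (Q *\<^sub>v u) n + vec_last (Q *\<^sub>v u') n"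
    if "u \<in> W" "u' \<in> W" for u u'
    using Q is_subspace_carrier[OF W] that
    by (intro eq_vecI) (auto simp: vec_last_def mult_add_distrib_mat_vec)
  have smult: "vec_last (Q *\<^sub>v (c \<cdot>\<^sub>v u)) n = c \<cdot>\<^sub>v vec_last (Q *\<^sub>v u) n" if "u \<in> W" for c u
    using Q is_subspace_carrier[OF W] that
    by (intro eq_vecI) (auto simp: vec_last_def mult_mat_vec)
  have "Q *\<^sub>v 0\<^sub>v (Suc n) = 0\<^sub>v (Suc n)"
    using Q by auto
  then have "vec_last (Q *\<^sub>v 0\<^sub>v (Suc n)) n = 0\<^sub>v n"
    by (intro eq_vecI) (auto simp: vec_last_def)
  then have "0\<^sub>v n \<in> (\<lambda>u. vec_last (Q *\<^sub>v u) n) ` W"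
    using is_subspace_zero[OF W] by force
  then show ?thesis
    unfolding is_subspace_def
    using is_subspace_add[OF W] is_subspace_smult[OF W] add smult
    by (auto simp flip: add smult)
qed

lemma one_block_mult_maps_to_coord_subspace:
  assumes W: "is_subspace (Suc n) W" and u: "u \<in> W"
    and Q1: "Q1 \<in> carrier_mat (Suc n) (Suc n)" and Q2: "Q2 \<in> carrier_mat n n"
    and tail: "Q2 *\<^sub>v vec_last (Q1 *\<^sub>v u) n \<in> coord_subspace k n"
  shows "(one_block n Q2 * Q1) *\<^sub>v u \<in> coord_subspace (Suc k) (Suc n)"
proof -
  have u_carrier: "u \<in> carrier_vec (Suc n)"
    using is_subspace_carrier[OF W u] .
  have "(one_block n Q2 * Q1) *\<^sub>v u = vec_first (Q1 *\<^sub>v u) 1 @\<^sub>v (Q2 *\<^sub>v vec_last (Q1 *\<^sub>v u) n)"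
    using assoc_mult_mat_vec[OF one_block_carrier[OF Q2] Q1 u_carrier]
      one_block_mult_vec[OF Q2 mult_mat_vec_carrier[OF Q1 u_carrier]] by simp
  moreover have "(one_block n Q2 * Q1) *\<^sub>v u \<in> carrier_vec (Suc n)"
    using mult_mat_vec_carrier[OF mult_carrier_mat[OF one_block_carrier[OF Q2] Q1] u_carrier] .
  ultimately show ?thesis
    using tail Q2 by (auto simp: coord_subspace_def)
qed

lemma one_block_mult_maps_to_subspace:
  assumes W: "is_subspace (Suc n) W" and w: "w \<in> W"
    and P1: "P1 \<in> carrier_mat (Suc n) (Suc n)" and Q1: "Q1 \<in> carrier_mat (Suc n) (Suc n)"
    and PQ1: "P1 * Q1 = 1\<^sub>m (Suc n)" and Q1w: "Q1 *\<^sub>v w = unit_vec (Suc n) 0"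
    and P2: "P2 \<in> carrier_mat n n"
    and v: "v \<in> coord_subspace (Suc k) (Suc n)"
    and tail: "P2 *\<^sub>v vec_last v n \<in> (\<lambda>u. vec_last (Q1 *\<^sub>v u) n) ` W"
  shows "(P1 * one_block n P2) *\<^sub>v v \<in> W"
proof -
  have v_carrier: "v \<in> carrier_vec (Suc n)"
    using v by (simp add: coord_subspace_def)
  obtain u where u: "u \<in> W" and u_tail: "P2 *\<^sub>v vec_last v n = vec_last (Q1 *\<^sub>v u) n"
    using tail by blast
  have u_carrier: "u \<in> carrier_vec (Suc n)" and w_carrier: "w \<in> carrier_vec (Suc n)"
    using is_subspace_carrier[OF W] u w by auto
  txt \<open>Adding a multiple of \<open>w\<close> to \<open>u\<close> adjusts the first coordinate after \<open>Q1\<close> only.\<close>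
  define c where "c = v $ 0 - (Q1 *\<^sub>v u) $ 0"
  define z where "z = u + c \<cdot>\<^sub>v w"
  have z: "z \<in> W"
    unfolding z_def using is_subspace_add[OF W u is_subspace_smult[OF W w]] .
  have "Q1 *\<^sub>v z = Q1 *\<^sub>v u + c \<cdot>\<^sub>v unit_vec (Suc n) 0"
    using Q1 u_carrier w_carrier Q1w by (simp add: z_def mult_add_distrib_mat_vec mult_mat_vec)
  also have "\<dots> = one_block n P2 *\<^sub>v v"
    unfolding one_block_mult_vec[OF P2 v_carrier] u_tail
    using Q1 u_carrier v_carrier by (intro eq_vecI) (auto simp: c_def vec_first_def vec_last_def)
  finally have "one_block n P2 *\<^sub>v v = Q1 *\<^sub>v z" ..
  then have "(P1 * one_block n P2) *\<^sub>v v = (P1 * Q1) *\<^sub>v z"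
    using assoc_mult_mat_vec[OF P1 one_block_carrier[OF P2] v_carrier]
      assoc_mult_mat_vec[OF P1 Q1 is_subspace_carrier[OF W z]] by simp
  then show ?thesis
    using PQ1 z is_subspace_carrier[OF W z] by simp
qed

lemma adapted_change_of_basis_Suc:
  assumes W: "is_subspace (Suc n) W" and w: "w \<in> W"
    and P1: "P1 \<in> carrier_mat (Suc n) (Suc n)" and Q1: "Q1 \<in> carrier_mat (Suc n) (Suc n)"
    and PQ1: "P1 * Q1 = 1\<^sub>m (Suc n)" and QP1: "Q1 * P1 = 1\<^sub>m (Suc n)"
    and Q1w: "Q1 *\<^sub>v w = unit_vec (Suc n) 0"
    and adapted: "adapted_change_of_basis ((\<lambda>u. vec_last (Q1 *\<^sub>v u) n) ` W) k n P2 Q2"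
  shows "adapted_change_of_basis W (Suc k) (Suc n) (P1 * one_block n P2) (one_block n Q2 * Q1)"
proof -
  have P2: "P2 \<in> carrier_mat n n" and Q2: "Q2 \<in> carrier_mat n n"
    and PQ2: "P2 * Q2 = 1\<^sub>m n" and QP2: "Q2 * P2 = 1\<^sub>m n"
    using adapted by (auto simp: adapted_change_of_basis_def)
  have "(P1 * one_block n P2) * (one_block n Q2 * Q1) = 1\<^sub>m (Suc n)"
    using P1 Q1 P2 Q2 PQ1 PQ2 by (intro inverse_mats_mult) (auto simp: one_block_mult)
  moreover have "(one_block n Q2 * Q1) * (P1 * one_block n P2) = 1\<^sub>m (Suc n)"
    using P1 Q1 P2 Q2 QP1 QP2 by (intro inverse_mats_mult) (auto simp: one_block_mult)
  moreover have "\<forall>v\<in>coord_subspace (Suc k) (Suc n). (P1 * one_block n P2) *\<^sub>v v \<in> W"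
  proof
    fix v assume v: "v \<in> coord_subspace (Suc k) (Suc n)"
    then have "vec_last v n \<in> coord_subspace k n"
      by (auto simp: coord_subspace_def vec_last_def)
    then show "(P1 * one_block n P2) *\<^sub>v v \<in> W"
      using one_block_mult_maps_to_subspace[OF W w P1 Q1 PQ1 Q1w P2 v] adapted
      by (auto simp: adapted_change_of_basis_def)
  qed
  ultimately show ?thesis
    using one_block_mult_maps_to_coord_subspace[OF W _ Q1 Q2] adapted
      mult_carrier_mat[OF one_block_carrier[OF Q2] Q1] mult_carrier_mat[OF P1 one_block_carrier[OF P2]]
    by (auto simp: adapted_change_of_basis_def)
qed

lemma subspace_adapted_change_of_basis:
  assumes "is_subspace n W"
  shows "\<exists>k P Q. adapted_change_of_basis W k n P Q"
  using assms
proof (induction n arbitrary: W)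
  case 0
  have "W \<subseteq> {0\<^sub>v 0}"
    using is_subspace_carrier[OF 0] carrier_vecD by fastforce
  with 0 show ?case
    using adapted_change_of_basis_zero by blast
next
  case (Suc n)
  show ?case
  proof (cases "W \<subseteq> {0\<^sub>v (Suc n)}")
    case True
    with Suc.prems show ?thesis
      using adapted_change_of_basis_zero by blast
  next
    case False
    then obtain w where w: "w \<in> W" "w \<noteq> 0\<^sub>v (Suc n)"
      by auto
    obtain P1 Q1 where P1: "P1 \<in> carrier_mat (Suc n) (Suc n)" and Q1: "Q1 \<in> carrier_mat (Suc n) (Suc n)"
      and PQ1: "P1 * Q1 = 1\<^sub>m (Suc n)" and QP1: "Q1 * P1 = 1\<^sub>m (Suc n)"
      and P1e: "P1 *\<^sub>v unit_vec (Suc n) 0 = w"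
      using invertible_mat_with_first_col[OF is_subspace_carrier[OF Suc.prems w(1)] w(2)] .
    have "Q1 *\<^sub>v w = (Q1 * P1) *\<^sub>v unit_vec (Suc n) 0"
      using P1 Q1 by (simp flip: P1e)
    then have Q1w: "Q1 *\<^sub>v w = unit_vec (Suc n) 0"
      using QP1 by simp
    obtain k P2 Q2 where "adapted_change_of_basis ((\<lambda>u. vec_last (Q1 *\<^sub>v u) n) ` W) k n P2 Q2"
      using Suc.IH[OF is_subspace_tail_image[OF Suc.prems Q1]] by blast
    then show ?thesis
      using adapted_change_of_basis_Suc[OF Suc.prems w(1) P1 Q1 PQ1 QP1 Q1w] by blast
  qed
qed

lemma adapted_change_of_basis_proper:
  assumes adapted: "adapted_change_of_basis W k n P Q" and W: "is_subspace n W"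
    and W0: "W \<noteq> {0\<^sub>v n}" and Wn: "W \<noteq> carrier_vec n"
  shows "0 < k" and "k < n"
proof -
  have k: "k \<le> n" and P: "P \<in> carrier_mat n n" and Q: "Q \<in> carrier_mat n n"
    and QW: "\<forall>w\<in>W. Q *\<^sub>v w \<in> coord_subspace k n" and PW: "\<forall>v\<in>coord_subspace k n. P *\<^sub>v v \<in> W"
    and PQ: "P * Q = 1\<^sub>m n"
    using adapted by (auto simp: adapted_change_of_basis_def)
  have PQv: "P *\<^sub>v (Q *\<^sub>v v) = v" if "v \<in> carrier_vec n" for v
    using that P Q PQ by (simp flip: assoc_mult_mat_vec)
  show "0 < k"
  proof (rule ccontr)
    assume "\<not> 0 < k"
    then have "Q *\<^sub>v w = 0\<^sub>v n" if "w \<in> W" for w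
      using QW that Q by (intro eq_vecI) (auto simp: coord_subspace_def)
    then have "W \<subseteq> {0\<^sub>v n}"
      using PQv P is_subspace_carrier[OF W] by force
    then show False
      using W0 is_subspace_zero[OF W] by blast
  qed
  show "k < n"
  proof (rule ccontr)
    assume "\<not> k < n"
    have "carrier_vec n \<subseteq> W"
    proof
      fix v :: "complex vec" assume v: "v \<in> carrier_vec n"
      have "Q *\<^sub>v v \<in> coord_subspace k n"
        using \<open>\<not> k < n\<close> Q v by (simp add: coord_subspace_def)
      then show "v \<in> W"
        using PW PQv[OF v] by metis
    qed
    then show False
      using Wn W by (auto simp: is_subspace_def)
  qed
qed

section \<open>Representations\<close>

lemma is_repD:
  assumes "is_rep G n \<rho>"
  shows "g \<in> carrier G \<Longrightarrow> \<rho> g \<in> carrier_mat n n"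
    and "\<rho> \<one>\<^bsub>G\<^esub> = 1\<^sub>m n"
    and "g \<in> carrier G \<Longrightarrow> h \<in> carrier G \<Longrightarrow> \<rho> (g \<otimes>\<^bsub>G\<^esub> h) = \<rho> g * \<rho> h"
  using assms unfolding is_rep_def by auto

lemma is_irr_repD:
  assumes "is_irr_rep G n \<sigma>"
  shows "is_rep G n \<sigma>" and "n > 0"
    and "is_subspace n W \<Longrightarrow> \<forall>g\<in>carrier G. \<forall>w\<in>W. \<sigma> g *\<^sub>v w \<in> W \<Longrightarrow>
      W = {0\<^sub>v n} \<or> W = carrier_vec n"
  using assms unfolding is_irr_rep_def by auto

lemma is_rep_similar:
  assumes rep: "is_rep G n \<rho>" and P: "P \<in> carrier_mat n n" and Q: "Q \<in> carrier_mat n n"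
    and PQ: "P * Q = 1\<^sub>m n" and QP: "Q * P = 1\<^sub>m n"
  shows "is_rep G n (\<lambda>g. Q * \<rho> g * P)"
proof -
  have "Q * \<rho> (g \<otimes>\<^bsub>G\<^esub> h) * P = (Q * \<rho> g * P) * (Q * \<rho> h * P)"
    if "g \<in> carrier G" "h \<in> carrier G" for g h
    using mult_conjugate_mat[OF is_repD(1)[OF rep that(1)] is_repD(1)[OF rep that(2)] P Q PQ]
      is_repD(3)[OF rep that] by simp
  moreover have "Q * \<rho> \<one>\<^bsub>G\<^esub> * P = 1\<^sub>m n"
    using is_repD(2)[OF rep] Q QP by simp
  ultimately show ?thesis
    using is_repD(1)[OF rep] P Q unfolding is_rep_def by auto
qed

lemma is_rep_blocks:
  assumes rep: "is_rep G n \<rho>" and k: "k \<le> n"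
    and tri: "\<forall>g\<in>carrier G. block_upper_triangular (\<rho> g) k n"
  shows "is_rep G k (\<lambda>g. upper_left_block (\<rho> g) k)"
    and "is_rep G (n - k) (\<lambda>g. lower_right_block (\<rho> g) k n)"
proof -
  note mult = block_upper_triangular_mult[OF is_repD(1)[OF rep] is_repD(1)[OF rep] k]
  show "is_rep G k (\<lambda>g. upper_left_block (\<rho> g) k)"
    unfolding is_rep_def
  proof (intro conjI ballI)
    show "upper_left_block (\<rho> \<one>\<^bsub>G\<^esub>) k = 1\<^sub>m k"
      using is_repD(2)[OF rep] k by (intro eq_matI) (auto simp: upper_left_block_def)
    show "upper_left_block (\<rho> (g \<otimes>\<^bsub>G\<^esub> h)) k = upper_left_block (\<rho> g) k * upper_left_block (\<rho> h) k"
      if "g \<in> carrier G" "h \<in> carrier G" for g h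
      using is_repD(3)[OF rep that] mult(1) tri that by simp
  qed (simp add: upper_left_block_def)
  show "is_rep G (n - k) (\<lambda>g. lower_right_block (\<rho> g) k n)"
    unfolding is_rep_def
  proof (intro conjI ballI)
    show "lower_right_block (\<rho> \<one>\<^bsub>G\<^esub>) k n = 1\<^sub>m (n - k)"
      using is_repD(2)[OF rep] k by (intro eq_matI) (auto simp: lower_right_block_def)
    show "lower_right_block (\<rho> (g \<otimes>\<^bsub>G\<^esub> h)) k n = lower_right_block (\<rho> g) k n * lower_right_block (\<rho> h) k n"
      if "g \<in> carrier G" "h \<in> carrier G" for g h
      using is_repD(3)[OF rep that] mult(2) tri that by simp
  qed (simp add: lower_right_block_def)
qed

lemma invariant_subspace_block_upper_triangular:
  assumes A: "A \<in> carrier_mat n n" and inv: "\<forall>w\<in>W. A *\<^sub>v w \<in> W"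
    and P: "P \<in> carrier_mat n n" and Q: "Q \<in> carrier_mat n n"
    and QW: "\<forall>w\<in>W. Q *\<^sub>v w \<in> coord_subspace k n" and PW: "\<forall>v\<in>coord_subspace k n. P *\<^sub>v v \<in> W"
  shows "block_upper_triangular (Q * A * P) k n"
  unfolding block_upper_triangular_def
proof (intro allI impI)
  fix i j assume i: "k \<le> i" "i < n" and j: "j < k"
  have "unit_vec n j \<in> coord_subspace k n"
    using i j by (simp add: coord_subspace_def)
  then have "Q *\<^sub>v (A *\<^sub>v (P *\<^sub>v unit_vec n j)) \<in> coord_subspace k n"
    using PW inv QW by blast
  moreover have "Q *\<^sub>v (A *\<^sub>v (P *\<^sub>v unit_vec n j)) = col (Q * A * P) j"
  proof -
    have QA: "Q * A \<in> carrier_mat n n"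
      using Q A by (rule mult_carrier_mat)
    have "Q *\<^sub>v (A *\<^sub>v (P *\<^sub>v unit_vec n j)) = (Q * A * P) *\<^sub>v unit_vec n j"
      using assoc_mult_mat_vec[OF QA P unit_vec_carrier] assoc_mult_mat_vec[OF Q A] P by simp
    also have "\<dots> = col (Q * A * P) j"
      using mult_unit_vec_eq_col[OF mult_carrier_mat[OF QA P]] i j by simp
    finally show ?thesis .
  qed
  ultimately show "(Q * A * P) $$ (i, j) = 0"
    using A P Q i j by (auto simp: coord_subspace_def)
qed

lemma reducible_rep_split:
  assumes rep: "is_rep G n \<rho>" and W: "is_subspace n W"
    and inv: "\<forall>g\<in>carrier G. \<forall>w\<in>W. \<rho> g *\<^sub>v w \<in> W"
    and W0: "W \<noteq> {0\<^sub>v n}" and Wn: "W \<noteq> carrier_vec n"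
  obtains k \<rho>1 \<rho>2 where "0 < k" "k < n" "is_rep G k \<rho>1" "is_rep G (n - k) \<rho>2"
    "\<forall>g\<in>carrier G. mat_trace (\<rho> g) = mat_trace (\<rho>1 g) + mat_trace (\<rho>2 g)"
proof -
  obtain k P Q where adapted: "adapted_change_of_basis W k n P Q"
    using subspace_adapted_change_of_basis[OF W] by blast
  then have k: "k \<le> n" and P: "P \<in> carrier_mat n n" and Q: "Q \<in> carrier_mat n n"
    and PQ: "P * Q = 1\<^sub>m n" and QP: "Q * P = 1\<^sub>m n"
    and QW: "\<forall>w\<in>W. Q *\<^sub>v w \<in> coord_subspace k n" and PW: "\<forall>v\<in>coord_subspace k n. P *\<^sub>v v \<in> W"
    by (auto simp: adapted_change_of_basis_def)
  define \<rho>' where "\<rho>' g = Q * \<rho> g * P" for g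
  have rep': "is_rep G n \<rho>'"
    unfolding \<rho>'_def by (rule is_rep_similar[OF rep P Q PQ QP])
  have tri: "\<forall>g\<in>carrier G. block_upper_triangular (\<rho>' g) k n"
    unfolding \<rho>'_def
    using invariant_subspace_block_upper_triangular[OF is_repD(1)[OF rep] _ P Q QW PW] inv by blast
  have "mat_trace (\<rho> g) = mat_trace (upper_left_block (\<rho>' g) k) + mat_trace (lower_right_block (\<rho>' g) k n)"
    if "g \<in> carrier G" for g
    using mat_trace_similar[OF is_repD(1)[OF rep that] P Q PQ]
      mat_trace_blocks[OF is_repD(1)[OF rep' that] k] unfolding \<rho>'_def by simp
  then show thesis
    using that[OF adapted_change_of_basis_proper[OF adapted W W0 Wn] is_rep_blocks[OF rep' k tri]]
    by blast
qed

lemma irr_rep_with_trace_ne_degree: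
  assumes h: "h \<in> carrier G" and "is_rep G n \<rho>" and "mat_trace (\<rho> h) \<noteq> of_nat n"
  shows "\<exists>m \<sigma>. is_irr_rep G m \<sigma> \<and> mat_trace (\<sigma> h) \<noteq> of_nat m"
  using assms(2,3)
proof (induction n arbitrary: \<rho> rule: less_induct)
  case (less n \<rho>)
  show ?case
  proof (cases "is_irr_rep G n \<rho>")
    case True
    with less.prems show ?thesis by blast
  next
    case False
    have "n \<noteq> 0"
      using less.prems(2) is_repD(1)[OF less.prems(1) h] by (cases n) (auto simp: mat_trace_def)
    with False less.prems(1) obtain W where W: "is_subspace n W"
      and inv: "\<forall>g\<in>carrier G. \<forall>w\<in>W. \<rho> g *\<^sub>v w \<in> W"
      and W0: "W \<noteq> {0\<^sub>v n}" and Wn: "W \<noteq> carrier_vec n"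
      unfolding is_irr_rep_def by blast
    obtain k \<rho>1 \<rho>2 where k: "0 < k" "k < n" and \<rho>1: "is_rep G k \<rho>1" and \<rho>2: "is_rep G (n - k) \<rho>2"
      and trace: "\<forall>g\<in>carrier G. mat_trace (\<rho> g) = mat_trace (\<rho>1 g) + mat_trace (\<rho>2 g)"
      by (rule reducible_rep_split[OF less.prems(1) W inv W0 Wn])
    have "mat_trace (\<rho>1 h) \<noteq> of_nat k \<or> mat_trace (\<rho>2 h) \<noteq> of_nat (n - k)"
      using trace h less.prems(2) k by (auto simp: of_nat_diff)
    then show ?thesis
      using less.IH[OF _ \<rho>1] less.IH[OF _ \<rho>2] k by auto
  qed
qed

text \<open>The left regular representation, in the basis of \<open>\<complex>G\<close> enumerated by \<open>f\<close>.\<close>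

definition regular_rep :: "('a, 'b) monoid_scheme \<Rightarrow> nat \<Rightarrow> (nat \<Rightarrow> 'a) \<Rightarrow> 'a \<Rightarrow> complex mat" where
  "regular_rep G N f g = mat N N (\<lambda>(i, j). if f i = g \<otimes>\<^bsub>G\<^esub> f j then 1 else 0)"

lemma is_rep_regular_rep:
  assumes G: "group G" and f: "bij_betw f {..<N} (carrier G)"
  shows "is_rep G N (regular_rep G N f)"
proof -
  interpret group G by fact
  have fG: "i < N \<Longrightarrow> f i \<in> carrier G" for i
    using f by (auto simp: bij_betw_def)
  have f_inj: "i < N \<Longrightarrow> j < N \<Longrightarrow> f i = f j \<longleftrightarrow> i = j" for i j
    using f by (auto simp: bij_betw_def inj_on_def)
  have f_surj: "x \<in> carrier G \<Longrightarrow> \<exists>i<N. f i = x" for x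
    using f by (force simp: bij_betw_def)
  have "regular_rep G N f (g \<otimes>\<^bsub>G\<^esub> g') = regular_rep G N f g * regular_rep G N f g'"
    if g: "g \<in> carrier G" and g': "g' \<in> carrier G" for g g'
  proof (rule eq_matI)
    fix i j assume "i < dim_row (regular_rep G N f g * regular_rep G N f g')"
      and "j < dim_col (regular_rep G N f g * regular_rep G N f g')"
    then have i: "i < N" and j: "j < N"
      by (auto simp: regular_rep_def)
    obtain l0 where l0: "l0 < N" and fl0: "f l0 = g' \<otimes>\<^bsub>G\<^esub> f j"
      using f_surj[of "g' \<otimes>\<^bsub>G\<^esub> f j"] g' fG[OF j] by auto
    have "(regular_rep G N f g * regular_rep G N f g') $$ (i, j)
        = (\<Sum>l<N. regular_rep G N f g $$ (i, l) * regular_rep G N f g' $$ (l, j))"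
      using i j by (intro index_mult_mat_sum) (auto simp: regular_rep_def)
    also have "\<dots> = (\<Sum>l<N. if l = l0 then (if f i = g \<otimes>\<^bsub>G\<^esub> f l0 then 1 else 0) else 0)"
      using i j fl0 f_inj[OF _ l0] by (intro sum.cong) (auto simp: regular_rep_def)
    also have "\<dots> = regular_rep G N f (g \<otimes>\<^bsub>G\<^esub> g') $$ (i, j)"
      using i j l0 fl0 g g' fG[OF j] by (simp add: regular_rep_def m_assoc)
    finally show "regular_rep G N f (g \<otimes>\<^bsub>G\<^esub> g') $$ (i, j)
        = (regular_rep G N f g * regular_rep G N f g') $$ (i, j)" ..
  qed (auto simp: regular_rep_def)
  moreover have "regular_rep G N f \<one>\<^bsub>G\<^esub> = 1\<^sub>m N"
    by (intro eq_matI) (auto simp: regular_rep_def fG f_inj)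
  ultimately show ?thesis
    unfolding is_rep_def by (auto simp: regular_rep_def)
qed

lemma mat_trace_regular_rep:
  assumes G: "group G" and f: "bij_betw f {..<N} (carrier G)"
    and h: "h \<in> carrier G" and h1: "h \<noteq> \<one>\<^bsub>G\<^esub>"
  shows "mat_trace (regular_rep G N f h) = 0"
proof -
  have "f i \<noteq> h \<otimes>\<^bsub>G\<^esub> f i" if "i < N" for i
    using group.r_cancel_one'[OF G _ h, of "f i"] f h1 that by (auto simp: bij_betw_def)
  then show ?thesis
    by (simp add: mat_trace_carrier[of _ N] regular_rep_def)
qed

lemma exists_rep_trace_ne_degree:
  assumes G: "group G" and fin: "finite (carrier G)" and h: "h \<in> carrier G" and h1: "h \<noteq> \<one>\<^bsub>G\<^esub>"
  shows "\<exists>n \<rho>. is_rep G n \<rho> \<and> mat_trace (\<rho> h) \<noteq> of_nat n"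
proof -
  define N where "N = card (carrier G)"
  obtain f where f: "bij_betw f {..<N} (carrier G)"
    using ex_bij_betw_nat_finite[OF fin] unfolding N_def atLeast0LessThan by blast
  have "N > 0"
    unfolding N_def using fin monoid.one_closed[OF group.is_monoid[OF G]] by (auto simp: card_gt_0_iff)
  then show ?thesis
    using is_rep_regular_rep[OF G f] mat_trace_regular_rep[OF G f h h1] by fastforce
qed

lemma smult_one_if_scalar_action:
  fixes A :: "'a::comm_ring_1 mat"
  assumes A: "A \<in> carrier_mat n n" and act: "\<forall>v\<in>carrier_vec n. A *\<^sub>v v = c \<cdot>\<^sub>v v"
  shows "A = c \<cdot>\<^sub>m 1\<^sub>m n"
proof (rule eq_matI)
  fix i j assume "i < dim_row (c \<cdot>\<^sub>m 1\<^sub>m n)" "j < dim_col (c \<cdot>\<^sub>m 1\<^sub>m n)"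
  then have i: "i < n" and j: "j < n" by auto
  have "A $$ (i, j) = (A *\<^sub>v unit_vec n j) $ i"
    using mult_unit_vec_eq_col[OF A j] A i j by simp
  also have "\<dots> = (c \<cdot>\<^sub>v unit_vec n j) $ i"
    using act by simp
  finally show "A $$ (i, j) = (c \<cdot>\<^sub>m 1\<^sub>m n) $$ (i, j)"
    using i j by simp
qed (use A in auto)

lemma irr_rep_commutant_scalar:
  assumes irr: "is_irr_rep G n \<sigma>" and A: "A \<in> carrier_mat n n"
    and comm: "\<forall>g\<in>carrier G. A * \<sigma> g = \<sigma> g * A"
  shows "\<exists>c. A = c \<cdot>\<^sub>m 1\<^sub>m n"
proof -
  note \<sigma> = is_repD(1)[OF is_irr_repD(1)[OF irr]]
  obtain c v0 where "eigenvector A v0 c"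
    using spectrum_non_empty[OF A is_irr_repD(2)[OF irr]] unfolding spectrum_def eigenvalue_def by auto
  then have v0: "v0 \<in> carrier_vec n" "v0 \<noteq> 0\<^sub>v n" "A *\<^sub>v v0 = c \<cdot>\<^sub>v v0"
    using A unfolding eigenvector_def by auto
  define W where "W = {v \<in> carrier_vec n. A *\<^sub>v v = c \<cdot>\<^sub>v v}"
  have "is_subspace n W"
    unfolding is_subspace_def W_def
    using A by (auto simp: mult_add_distrib_mat_vec smult_add_distrib_vec mult_mat_vec
        smult_smult_assoc mult.commute)
  moreover have "\<forall>g\<in>carrier G. \<forall>w\<in>W. \<sigma> g *\<^sub>v w \<in> W"
  proof (intro ballI)
    fix g w assume g: "g \<in> carrier G" and w: "w \<in> W"
    then have w_carrier: "w \<in> carrier_vec n" and Aw: "A *\<^sub>v w = c \<cdot>\<^sub>v w"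
      unfolding W_def by auto
    have "A *\<^sub>v (\<sigma> g *\<^sub>v w) = (\<sigma> g * A) *\<^sub>v w"
      using comm g A \<sigma>[OF g] w_carrier by (simp flip: assoc_mult_mat_vec)
    also have "\<dots> = c \<cdot>\<^sub>v (\<sigma> g *\<^sub>v w)"
      using A \<sigma>[OF g] w_carrier Aw by (simp add: mult_mat_vec)
    finally show "\<sigma> g *\<^sub>v w \<in> W"
      unfolding W_def using \<sigma>[OF g] w_carrier by auto
  qed
  moreover have "W \<noteq> {0\<^sub>v n}"
    using v0 unfolding W_def by auto
  ultimately have "W = carrier_vec n"
    using is_irr_repD(3)[OF irr] by blast
  then show ?thesis
    using smult_one_if_scalar_action[OF A] unfolding W_def by blast
qed

lemma irr_rep_central_scalar:
  assumes G: "group G" and fin: "finite (carrier G)" and irr: "is_irr_rep G n \<sigma>"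
    and z: "z \<in> group_center G"
  shows "\<exists>c. \<sigma> z = c \<cdot>\<^sub>m 1\<^sub>m n \<and> cmod c = 1"
proof -
  interpret group G by fact
  note rep = is_irr_repD(1)[OF irr]
  have zG: "z \<in> carrier G" and z_comm: "\<forall>g\<in>carrier G. z \<otimes>\<^bsub>G\<^esub> g = g \<otimes>\<^bsub>G\<^esub> z"
    using z unfolding group_center_def by auto
  have "\<forall>g\<in>carrier G. \<sigma> z * \<sigma> g = \<sigma> g * \<sigma> z"
    using z_comm zG by (simp flip: is_repD(3)[OF rep])
  then obtain c where c: "\<sigma> z = c \<cdot>\<^sub>m 1\<^sub>m n"
    using irr_rep_commutant_scalar[OF irr is_repD(1)[OF rep zG]] by blast
  have pow: "\<sigma> (z [^]\<^bsub>G\<^esub> k) = c ^ k \<cdot>\<^sub>m 1\<^sub>m n" for k :: nat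
  proof (induction k)
    case 0
    have "1\<^sub>m n = (1::complex) \<cdot>\<^sub>m 1\<^sub>m n"
      by (rule eq_matI) auto
    with is_repD(2)[OF rep] show ?case
      by simp
  next
    case (Suc k)
    have "\<sigma> (z [^]\<^bsub>G\<^esub> Suc k) = (c ^ k \<cdot>\<^sub>m 1\<^sub>m n) * (c \<cdot>\<^sub>m 1\<^sub>m n)"
      using is_repD(3)[OF rep nat_pow_closed[OF zG] zG] Suc c by simp
    also have "\<dots> = c ^ k \<cdot>\<^sub>m (c \<cdot>\<^sub>m 1\<^sub>m n)"
      using mult_smult_assoc_mat[of "1\<^sub>m n" n n "c \<cdot>\<^sub>m 1\<^sub>m n" n "c ^ k"] by simp
    also have "\<dots> = c ^ Suc k \<cdot>\<^sub>m 1\<^sub>m n"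
      by (rule eq_matI) auto
    finally show ?case .
  qed
  have "(c ^ order G \<cdot>\<^sub>m 1\<^sub>m n) $$ (0, 0) = 1\<^sub>m n $$ (0, 0)"
    using pow[of "order G"] pow_order_eq_1[OF zG] is_repD(2)[OF rep] by simp
  then have "c ^ order G = 1"
    using is_irr_repD(2)[OF irr] by simp
  then have "cmod c ^ order G = 1"
    by (metis norm_one norm_power)
  moreover have "order G > 0"
    using fin one_closed by (auto simp: order_def card_gt_0_iff)
  ultimately have "cmod c = 1"
    using power_eq_imp_eq_base[of "cmod c" "order G" 1] by simp
  with c show ?thesis by blast
qed

lemma irr_characters_separate:
  assumes G: "group G" and fin: "finite (carrier G)" and h: "h \<in> carrier G" and h1: "h \<noteq> \<one>\<^bsub>G\<^esub>"
  shows "\<exists>n \<sigma>. is_irr_rep G n \<sigma> \<and> character_of G \<sigma> h \<noteq> character_of G \<sigma> \<one>\<^bsub>G\<^esub>"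
proof -
  obtain n \<rho> where "is_rep G n \<rho>" "mat_trace (\<rho> h) \<noteq> of_nat n"
    using exists_rep_trace_ne_degree[OF assms] by blast
  then obtain m \<sigma> where \<sigma>: "is_irr_rep G m \<sigma>" and trace: "mat_trace (\<sigma> h) \<noteq> of_nat m"
    using irr_rep_with_trace_ne_degree[OF h] by blast
  have "character_of G \<sigma> h \<noteq> character_of G \<sigma> \<one>\<^bsub>G\<^esub>"
    using is_repD(2)[OF is_irr_repD(1)[OF \<sigma>]] trace h monoid.one_closed[OF group.is_monoid[OF G]]
    by (simp add: character_of_def)
  with \<sigma> show ?thesis
    by blast
qed


section \<open>Characters and the subgroup K\<close>

lemma character_of_one:
  assumes "group G" "is_rep G n \<rho>"
  shows "character_of G \<rho> \<one>\<^bsub>G\<^esub> = of_nat n"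
  using is_repD(2)[OF assms(2)] monoid.one_closed[OF group.is_monoid[OF assms(1)]]
  by (simp add: character_of_def)

lemma group_center_subset_char_center:
  assumes G: "group G" and fin: "finite (carrier G)" and \<chi>: "\<chi> \<in> Irr G"
  shows "group_center G \<subseteq> char_center G \<chi>"
proof
  fix z assume z: "z \<in> group_center G"
  then have zG: "z \<in> carrier G"
    by (simp add: group_center_def)
  from \<chi> obtain n \<sigma> where irr: "is_irr_rep G n \<sigma>" and \<chi>_def: "\<chi> = character_of G \<sigma>"
    unfolding Irr_def by blast
  obtain c where "\<sigma> z = c \<cdot>\<^sub>m 1\<^sub>m n" "cmod c = 1"
    using irr_rep_central_scalar[OF G fin irr z] by blast
  then have "cmod (\<chi> z) = real n"
    using zG unfolding \<chi>_def character_of_def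
    by (simp add: mat_trace_smult[of _ n] norm_mult)
  then show "z \<in> char_center G \<chi>"
    using zG character_of_one[OF G is_irr_repD(1)[OF irr]]
    unfolding char_center_def \<chi>_def by simp
qed

lemma comm_group_iff_group_center:
  assumes G: "group G"
  shows "comm_group G \<longleftrightarrow> group_center G = carrier G"
proof
  assume "comm_group G"
  then show "group_center G = carrier G"
    using comm_monoid.m_comm[OF comm_group.axioms(1)] by (auto simp: group_center_def)
next
  assume center: "group_center G = carrier G"
  show "comm_group G"
  proof (rule group.group_comm_groupI[OF G])
    fix x y assume "x \<in> carrier G" "y \<in> carrier G"
    then have "x \<in> group_center G" "y \<in> carrier G"
      by (simp_all add: center)
    then show "x \<otimes>\<^bsub>G\<^esub> y = y \<otimes>\<^bsub>G\<^esub> x"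
      by (simp add: group_center_def)
  qed
qed

lemma K_grp_noncomm:
  "\<not> comm_group G \<Longrightarrow> K_grp G = carrier G \<inter> (\<Inter>\<chi>\<in>X_set G. char_kernel G \<chi>)"
  unfolding K_grp_def by simp

lemma one_in_K_grp: "group G \<Longrightarrow> \<one>\<^bsub>G\<^esub> \<in> K_grp G"
  using monoid.one_closed[OF group.is_monoid, of G] by (simp add: K_grp_def char_kernel_def)

lemma is_irr_rep_comp_epi:
  assumes G: "group G" and H: "group H" and f: "f \<in> epi G H" and irr: "is_irr_rep H n \<sigma>"
  shows "is_irr_rep G n (\<sigma> \<circ> f)"
proof -
  note rep = is_irr_repD(1)[OF irr]
  have hom: "f \<in> hom G H" and surj: "f ` carrier G = carrier H"
    using f by (auto simp: epi_def)
  have "is_rep G n (\<sigma> \<circ> f)"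
    using is_repD[OF rep] hom_in_carrier[OF hom] hom_mult[OF hom] hom_one[OF hom G H]
    unfolding is_rep_def by auto
  moreover have "(\<forall>g\<in>carrier G. \<forall>w\<in>W. (\<sigma> \<circ> f) g *\<^sub>v w \<in> W) \<longleftrightarrow> (\<forall>h\<in>carrier H. \<forall>w\<in>W. \<sigma> h *\<^sub>v w \<in> W)"
    for W
    by (simp flip: surj)
  ultimately show ?thesis
    using irr unfolding is_irr_rep_def by simp
qed

lemma character_of_comp:
  "f \<in> hom G H \<Longrightarrow> x \<in> carrier G \<Longrightarrow> character_of G (\<sigma> \<circ> f) x = character_of H \<sigma> (f x)"
  by (simp add: character_of_def hom_in_carrier)

lemma char_kernel_comp:
  assumes "group G" "group H" "f \<in> hom G H"
  shows "char_kernel G (character_of G (\<sigma> \<circ> f)) =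
    {x \<in> carrier G. f x \<in> char_kernel H (character_of H \<sigma>)}"
  using assms character_of_comp[OF assms(3)] hom_in_carrier[OF assms(3)] hom_one[OF assms(3,1,2)]
    monoid.one_closed[OF group.is_monoid[OF assms(1)]]
  by (auto simp: char_kernel_def)

lemma comp_epi_in_X_set:
  assumes G: "group G" and H: "group H" and fin: "finite (carrier G)"
    and f: "f \<in> epi G H" and irr: "is_irr_rep H n \<sigma>"
    and x: "x \<in> carrier G" "x \<notin> group_center G" "f x \<in> char_center H (character_of H \<sigma>)"
  shows "character_of G (\<sigma> \<circ> f) \<in> X_set G"
proof -
  have hom: "f \<in> hom G H"
    using f by (simp add: epi_def)
  have irr': "character_of G (\<sigma> \<circ> f) \<in> Irr G"
    unfolding Irr_def using is_irr_rep_comp_epi[OF G H f irr] by blast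
  have "x \<in> char_center G (character_of G (\<sigma> \<circ> f))"
    using x character_of_comp[OF hom] hom_one[OF hom G H]
      monoid.one_closed[OF group.is_monoid[OF G]]
    by (simp add: char_center_def)
  with x(2) group_center_subset_char_center[OF G fin irr'] show ?thesis
    unfolding X_set_def using irr' by blast
qed

lemma K_grp_subset_kernel:
  assumes G: "group G" and H: "group H" and fin: "finite (carrier G)" and f: "f \<in> epi G H"
    and x: "x \<in> carrier G" "x \<notin> group_center G" "f x = \<one>\<^bsub>H\<^esub>"
  shows "K_grp G \<subseteq> {g \<in> carrier G. f g = \<one>\<^bsub>H\<^esub>}"
proof
  fix g assume g: "g \<in> K_grp G"
  have hom: "f \<in> hom G H" and surj: "f ` carrier G = carrier H"
    using f by (auto simp: epi_def)
  have finH: "finite (carrier H)"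
    using fin by (simp flip: surj)
  have "\<not> comm_group G"
    using x comm_group_iff_group_center[OF G] by blast
  then have "g \<in> carrier G \<inter> (\<Inter>\<chi>\<in>X_set G. char_kernel G \<chi>)"
    using g K_grp_noncomm by blast
  then have gG: "g \<in> carrier G" and g_ker: "\<forall>\<chi>\<in>X_set G. g \<in> char_kernel G \<chi>"
    by auto
  have "f g = \<one>\<^bsub>H\<^esub>"
  proof (rule ccontr)
    assume "f g \<noteq> \<one>\<^bsub>H\<^esub>"
    then obtain n \<sigma> where irr: "is_irr_rep H n \<sigma>"
      and sep: "character_of H \<sigma> (f g) \<noteq> character_of H \<sigma> \<one>\<^bsub>H\<^esub>"
      using irr_characters_separate[OF H finH hom_in_carrier[OF hom gG]] by blast
    have "f x \<in> char_center H (character_of H \<sigma>)"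
      using x(3) monoid.one_closed[OF group.is_monoid[OF H]] by (simp add: char_center_def)
    then have "g \<in> char_kernel G (character_of G (\<sigma> \<circ> f))"
      using g_ker comp_epi_in_X_set[OF G H fin f irr x(1,2)] by blast
    then have "f g \<in> char_kernel H (character_of H \<sigma>)"
      using char_kernel_comp[OF G H hom, of \<sigma>] by blast
    with sep show False
      by (simp add: char_kernel_def)
  qed
  with gG show "g \<in> {g \<in> carrier G. f g = \<one>\<^bsub>H\<^esub>}"
    by simp
qed

section \<open>Direct products\<close>

lemma noncentral_element:
  assumes "group G" "\<not> comm_group G"
  obtains a where "a \<in> carrier G" "a \<notin> group_center G"
proof -
  have "group_center G \<noteq> carrier G" "group_center G \<subseteq> carrier G"
    using assms comm_group_iff_group_center by (auto simp: group_center_def)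
  then show thesis
    using that by blast
qed

lemma fst_epi_DirProd:
  assumes "group G" "group H"
  shows "fst \<in> epi (G \<times>\<times> H) G"
proof -
  have "x \<in> fst ` carrier (G \<times>\<times> H)" if "x \<in> carrier G" for x
    using that monoid.one_closed[OF group.is_monoid[OF assms(2)]]
    by (intro image_eqI[of _ _ "(x, \<one>\<^bsub>H\<^esub>)"]) auto
  then show ?thesis
    by (auto simp: epi_def hom_def)
qed

lemma snd_epi_DirProd:
  assumes "group G" "group H"
  shows "snd \<in> epi (G \<times>\<times> H) H"
proof -
  have "y \<in> snd ` carrier (G \<times>\<times> H)" if "y \<in> carrier H" for y
    using that monoid.one_closed[OF group.is_monoid[OF assms(1)]]
    by (intro image_eqI[of _ _ "(\<one>\<^bsub>G\<^esub>, y)"]) auto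
  then show ?thesis
    by (auto simp: epi_def hom_def)
qed

lemma group_center_DirProd:
  assumes G: "group G" and H: "group H"
  shows "group_center (G \<times>\<times> H) = group_center G \<times> group_center H"
proof
  have oneG: "\<one>\<^bsub>G\<^esub> \<in> carrier G" and oneH: "\<one>\<^bsub>H\<^esub> \<in> carrier H"
    using monoid.one_closed[OF group.is_monoid] G H by auto
  show "group_center (G \<times>\<times> H) \<subseteq> group_center G \<times> group_center H"
  proof (clarify)
    fix a b assume ab: "(a, b) \<in> group_center (G \<times>\<times> H)"
    then have comm: "a \<otimes>\<^bsub>G\<^esub> x = x \<otimes>\<^bsub>G\<^esub> a \<and> b \<otimes>\<^bsub>H\<^esub> y = y \<otimes>\<^bsub>H\<^esub> b"
      if "x \<in> carrier G" "y \<in> carrier H" for x y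
      using that by (auto simp: group_center_def)
    show "a \<in> group_center G \<and> b \<in> group_center H"
      using ab comm oneG oneH unfolding group_center_def by auto
  qed
  show "group_center G \<times> group_center H \<subseteq> group_center (G \<times>\<times> H)"
    unfolding group_center_def by auto
qed

lemma DirProd_not_comm_group:
  assumes M: "group M" and N: "group N" and ncM: "\<not> comm_group M"
  shows "\<not> comm_group (M \<times>\<times> N)"
proof -
  obtain a where "a \<in> carrier M" "a \<notin> group_center M"
    using noncentral_element[OF M ncM] .
  then have "(a, \<one>\<^bsub>N\<^esub>) \<in> carrier (M \<times>\<times> N) - group_center (M \<times>\<times> N)"
    using monoid.one_closed[OF group.is_monoid[OF N]] group_center_DirProd[OF M N] by auto
  then show ?thesis
    using comm_group_iff_group_center[OF DirProd_group[OF M N]] by auto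
qed

lemma K_grp_DirProd_subset_snd:
  assumes M: "group M" and N: "group N" and fin: "finite (carrier (M \<times>\<times> N))"
    and ncM: "\<not> comm_group M"
  shows "K_grp (M \<times>\<times> N) \<subseteq> {x \<in> carrier (M \<times>\<times> N). snd x = \<one>\<^bsub>N\<^esub>}"
proof -
  obtain a where "a \<in> carrier M" "a \<notin> group_center M"
    using noncentral_element[OF M ncM] .
  then show ?thesis
    using K_grp_subset_kernel[OF DirProd_group[OF M N] N fin snd_epi_DirProd[OF M N], of "(a, \<one>\<^bsub>N\<^esub>)"]
      monoid.one_closed[OF group.is_monoid[OF N]] group_center_DirProd[OF M N] by auto
qed

lemma K_grp_DirProd_subset_fst:
  assumes M: "group M" and N: "group N" and fin: "finite (carrier (M \<times>\<times> N))"
    and ncN: "\<not> comm_group N"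
  shows "K_grp (M \<times>\<times> N) \<subseteq> {x \<in> carrier (M \<times>\<times> N). fst x = \<one>\<^bsub>M\<^esub>}"
proof -
  obtain b where "b \<in> carrier N" "b \<notin> group_center N"
    using noncentral_element[OF N ncN] .
  then show ?thesis
    using K_grp_subset_kernel[OF DirProd_group[OF M N] M fin fst_epi_DirProd[OF M N], of "(\<one>\<^bsub>M\<^esub>, b)"]
      monoid.one_closed[OF group.is_monoid[OF M]] group_center_DirProd[OF M N] by auto
qed

lemma K_grp_DirProd_noncomm:
  assumes M: "group M" and N: "group N" and fin: "finite (carrier (M \<times>\<times> N))"
    and ncM: "\<not> comm_group M" and ncN: "\<not> comm_group N"
  shows "K_grp (M \<times>\<times> N) = {\<one>\<^bsub>M \<times>\<times> N\<^esub>}"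
  using K_grp_DirProd_subset_snd[OF M N fin ncM] K_grp_DirProd_subset_fst[OF M N fin ncN]
    one_in_K_grp[OF DirProd_group[OF M N]] by auto

lemma fst_K_grp_DirProd:
  assumes M: "group M" and N: "group N" and fin: "finite (carrier (M \<times>\<times> N))"
    and ncM: "\<not> comm_group M" and x: "x \<in> K_grp (M \<times>\<times> N)"
  shows "fst x \<in> K_grp M"
proof -
  have MN: "group (M \<times>\<times> N)"
    using DirProd_group[OF M N] .
  have oneN: "\<one>\<^bsub>N\<^esub> \<in> carrier N"
    using monoid.one_closed[OF group.is_monoid[OF N]] .
  have xG: "x \<in> carrier (M \<times>\<times> N)" and x_ker: "\<forall>\<chi>\<in>X_set (M \<times>\<times> N). x \<in> char_kernel (M \<times>\<times> N) \<chi>"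
    using x DirProd_not_comm_group[OF M N ncM] by (auto simp: K_grp_noncomm)
  have "fst x \<in> char_kernel M \<theta>'" if \<theta>': "\<theta>' \<in> X_set M" for \<theta>'
  proof -
    obtain n \<theta> where irr: "is_irr_rep M n \<theta>" and \<theta>'_def: "\<theta>' = character_of M \<theta>"
      using \<theta>' unfolding X_set_def Irr_def by blast
    obtain a where "a \<in> char_center M \<theta>'" "a \<notin> group_center M"
      using \<theta>' unfolding X_set_def by blast
    then have "character_of (M \<times>\<times> N) (\<theta> \<circ> fst) \<in> X_set (M \<times>\<times> N)"
      using comp_epi_in_X_set[OF MN M fin fst_epi_DirProd[OF M N] irr, of "(a, \<one>\<^bsub>N\<^esub>)"]
        oneN group_center_DirProd[OF M N] \<theta>'_def by (auto simp: char_center_def)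
    then show ?thesis
      using x_ker char_kernel_comp[OF MN M, of fst \<theta>] fst_epi_DirProd[OF M N] \<theta>'_def
      by (auto simp: epi_def)
  qed
  then show ?thesis
    using xG ncM by (auto simp: K_grp_noncomm)
qed

lemma one_in_group_center: "group G \<Longrightarrow> \<one>\<^bsub>G\<^esub> \<in> group_center G"
  using monoid.one_closed[OF group.is_monoid, of G] monoid.l_one[OF group.is_monoid, of G]
    monoid.r_one[OF group.is_monoid, of G]
  by (simp add: group_center_def)

lemma irr_rep_DirProd_comm_scalar:
  assumes M: "group M" and N: "comm_group N" and fin: "finite (carrier (M \<times>\<times> N))"
    and irr: "is_irr_rep (M \<times>\<times> N) n \<rho>" and a: "a \<in> carrier M" and b: "b \<in> carrier N"
  shows "\<exists>c. \<rho> (a, b) = c \<cdot>\<^sub>m \<rho> (a, \<one>\<^bsub>N\<^esub>) \<and> cmod c = 1"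
proof -
  have N': "group N"
    using N by (rule comm_group.axioms(2))
  have MN: "group (M \<times>\<times> N)"
    using DirProd_group[OF M N'] .
  note rep = is_irr_repD(1)[OF irr]
  have oneM: "\<one>\<^bsub>M\<^esub> \<in> carrier M" and oneN: "\<one>\<^bsub>N\<^esub> \<in> carrier N"
    using monoid.one_closed[OF group.is_monoid] M N' by auto
  have "(\<one>\<^bsub>M\<^esub>, b) \<in> group_center (M \<times>\<times> N)"
    using group_center_DirProd[OF M N'] comm_group_iff_group_center[OF N'] N b
      one_in_group_center[OF M] by simp
  then obtain c where c: "\<rho> (\<one>\<^bsub>M\<^esub>, b) = c \<cdot>\<^sub>m 1\<^sub>m n" "cmod c = 1"
    using irr_rep_central_scalar[OF MN fin irr] by blast
  have "(a, b) = (a, \<one>\<^bsub>N\<^esub>) \<otimes>\<^bsub>M \<times>\<times> N\<^esub> (\<one>\<^bsub>M\<^esub>, b)"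
    using a b monoid.r_one[OF group.is_monoid[OF M]] monoid.l_one[OF group.is_monoid[OF N']] by simp
  then have "\<rho> (a, b) = \<rho> (a, \<one>\<^bsub>N\<^esub>) * (c \<cdot>\<^sub>m 1\<^sub>m n)"
    using is_repD(3)[OF rep, of "(a, \<one>\<^bsub>N\<^esub>)" "(\<one>\<^bsub>M\<^esub>, b)"] a b oneM oneN c by simp
  also have "\<dots> = c \<cdot>\<^sub>m (\<rho> (a, \<one>\<^bsub>N\<^esub>) * 1\<^sub>m n)"
    using mult_smult_distrib[OF is_repD(1)[OF rep] one_carrier_mat] a oneN by simp
  also have "\<dots> = c \<cdot>\<^sub>m \<rho> (a, \<one>\<^bsub>N\<^esub>)"
    using is_repD(1)[OF rep, of "(a, \<one>\<^bsub>N\<^esub>)"] a oneN by simp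
  finally show ?thesis
    using c by blast
qed

lemma irr_rep_DirProd_comm_restrict:
  assumes M: "group M" and N: "comm_group N" and fin: "finite (carrier (M \<times>\<times> N))"
    and irr: "is_irr_rep (M \<times>\<times> N) n \<rho>"
  shows "is_irr_rep M n (\<lambda>a. \<rho> (a, \<one>\<^bsub>N\<^esub>))"
proof -
  have N': "group N"
    using N by (rule comm_group.axioms(2))
  note rep = is_irr_repD(1)[OF irr]
  have oneN: "\<one>\<^bsub>N\<^esub> \<in> carrier N"
    using monoid.one_closed[OF group.is_monoid[OF N']] .
  have "is_rep M n (\<lambda>a. \<rho> (a, \<one>\<^bsub>N\<^esub>))"
    unfolding is_rep_def
  proof (intro conjI ballI)
    fix g h assume g: "g \<in> carrier M" and h: "h \<in> carrier M"
    have "(g \<otimes>\<^bsub>M\<^esub> h, \<one>\<^bsub>N\<^esub>) = (g, \<one>\<^bsub>N\<^esub>) \<otimes>\<^bsub>M \<times>\<times> N\<^esub> (h, \<one>\<^bsub>N\<^esub>)"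
      using monoid.l_one[OF group.is_monoid[OF N'] oneN] by simp
    then show "\<rho> (g \<otimes>\<^bsub>M\<^esub> h, \<one>\<^bsub>N\<^esub>) = \<rho> (g, \<one>\<^bsub>N\<^esub>) * \<rho> (h, \<one>\<^bsub>N\<^esub>)"
      using is_repD(3)[OF rep, of "(g, \<one>\<^bsub>N\<^esub>)" "(h, \<one>\<^bsub>N\<^esub>)"] g h oneN by simp
  qed (use is_repD(1,2)[OF rep] oneN in auto)
  moreover have "W = {0\<^sub>v n} \<or> W = carrier_vec n"
    if W: "is_subspace n W" and inv: "\<forall>a\<in>carrier M. \<forall>w\<in>W. \<rho> (a, \<one>\<^bsub>N\<^esub>) *\<^sub>v w \<in> W" for W
  proof -
    have "\<rho> p *\<^sub>v w \<in> W" if p: "p \<in> carrier (M \<times>\<times> N)" and w: "w \<in> W" for p w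
    proof -
      obtain a b where ab: "p = (a, b)" "a \<in> carrier M" "b \<in> carrier N"
        using p by auto
      obtain c where "\<rho> (a, b) = c \<cdot>\<^sub>m \<rho> (a, \<one>\<^bsub>N\<^esub>)"
        using irr_rep_DirProd_comm_scalar[OF M N fin irr ab(2,3)] by blast
      then have "\<rho> p *\<^sub>v w = c \<cdot>\<^sub>v (\<rho> (a, \<one>\<^bsub>N\<^esub>) *\<^sub>v w)"
        using ab is_repD(1)[OF rep, of "(a, \<one>\<^bsub>N\<^esub>)"] oneN is_subspace_carrier[OF W w]
        by (simp add: smult_mult_mat_vec)
      then show ?thesis
        using is_subspace_smult[OF W] inv ab(2) w by simp
    qed
    then show ?thesis
      using is_irr_repD(3)[OF irr W] by blast
  qed
  ultimately show ?thesis
    using is_irr_repD(2)[OF irr] unfolding is_irr_rep_def by blast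
qed

lemma cmod_character_DirProd_comm:
  assumes M: "group M" and N: "comm_group N" and fin: "finite (carrier (M \<times>\<times> N))"
    and irr: "is_irr_rep (M \<times>\<times> N) n \<rho>" and a: "a \<in> carrier M" and b: "b \<in> carrier N"
  shows "cmod (character_of (M \<times>\<times> N) \<rho> (a, b)) = cmod (character_of M (\<lambda>a. \<rho> (a, \<one>\<^bsub>N\<^esub>)) a)"
proof -
  have oneN: "\<one>\<^bsub>N\<^esub> \<in> carrier N"
    using monoid.one_closed[OF group.is_monoid[OF comm_group.axioms(2)[OF N]]] .
  obtain c where "\<rho> (a, b) = c \<cdot>\<^sub>m \<rho> (a, \<one>\<^bsub>N\<^esub>)" "cmod c = 1"
    using irr_rep_DirProd_comm_scalar[OF M N fin irr a b] by blast
  then show ?thesis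
    using a b oneN is_repD(1)[OF is_irr_repD(1)[OF irr], of "(a, \<one>\<^bsub>N\<^esub>)"]
    by (simp add: character_of_def mat_trace_smult norm_mult)
qed

lemma X_set_DirProd_comm:
  assumes M: "group M" and N: "comm_group N" and fin: "finite (carrier (M \<times>\<times> N))"
    and \<chi>: "\<chi> \<in> X_set (M \<times>\<times> N)"
  shows "\<exists>\<theta>\<in>X_set M. \<forall>a\<in>carrier M. \<chi> (a, \<one>\<^bsub>N\<^esub>) = \<theta> a"
proof -
  have N': "group N"
    using N by (rule comm_group.axioms(2))
  have oneM: "\<one>\<^bsub>M\<^esub> \<in> carrier M" and oneN: "\<one>\<^bsub>N\<^esub> \<in> carrier N"
    using monoid.one_closed[OF group.is_monoid] M N' by auto
  have finM: "finite (carrier M)"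
    using fin oneN finite_cartesian_productD1[of "carrier M" "carrier N"] by auto
  obtain n \<rho> where irr: "is_irr_rep (M \<times>\<times> N) n \<rho>" and \<chi>_def: "\<chi> = character_of (M \<times>\<times> N) \<rho>"
    using \<chi> unfolding X_set_def Irr_def by blast
  define \<theta> where "\<theta> = character_of M (\<lambda>a. \<rho> (a, \<one>\<^bsub>N\<^esub>))"
  note cmod_\<chi> = cmod_character_DirProd_comm[OF M N fin irr, folded \<chi>_def \<theta>_def]
  have irr\<theta>: "\<theta> \<in> Irr M"
    unfolding \<theta>_def Irr_def using irr_rep_DirProd_comm_restrict[OF M N fin irr] by blast
  obtain x where x: "x \<in> char_center (M \<times>\<times> N) \<chi>" "x \<notin> group_center (M \<times>\<times> N)"
    using \<chi> unfolding X_set_def by blast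
  then obtain a b where ab: "x = (a, b)" "a \<in> carrier M" "b \<in> carrier N"
    unfolding char_center_def by auto
  have "a \<notin> group_center M"
    using x ab group_center_DirProd[OF M N'] comm_group_iff_group_center[OF N'] N by auto
  moreover have "a \<in> char_center M \<theta>"
    using x ab cmod_\<chi>[OF ab(2,3)] cmod_\<chi>[OF oneM oneN] by (simp add: char_center_def)
  ultimately have "\<theta> \<in> X_set M"
    using irr\<theta> group_center_subset_char_center[OF M finM irr\<theta>] unfolding X_set_def by blast
  moreover have "\<chi> (a, \<one>\<^bsub>N\<^esub>) = \<theta> a" if "a \<in> carrier M" for a
    using that oneN by (simp add: \<chi>_def \<theta>_def character_of_def)
  ultimately show ?thesis
    by blast
qed

lemma K_grp_times_one_subset_K_grp_DirProd:
  assumes M: "group M" and N: "comm_group N" and fin: "finite (carrier (M \<times>\<times> N))"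
    and ncM: "\<not> comm_group M" and g: "g \<in> K_grp M"
  shows "(g, \<one>\<^bsub>N\<^esub>) \<in> K_grp (M \<times>\<times> N)"
proof -
  have N': "group N"
    using N by (rule comm_group.axioms(2))
  have oneM: "\<one>\<^bsub>M\<^esub> \<in> carrier M" and oneN: "\<one>\<^bsub>N\<^esub> \<in> carrier N"
    using monoid.one_closed[OF group.is_monoid] M N' by auto
  have gM: "g \<in> carrier M" and g_ker: "\<forall>\<theta>\<in>X_set M. g \<in> char_kernel M \<theta>"
    using g ncM by (auto simp: K_grp_noncomm)
  have "(g, \<one>\<^bsub>N\<^esub>) \<in> char_kernel (M \<times>\<times> N) \<chi>" if \<chi>: "\<chi> \<in> X_set (M \<times>\<times> N)" for \<chi>
  proof -
    obtain \<theta> where "\<theta> \<in> X_set M" and \<chi>\<theta>: "\<forall>a\<in>carrier M. \<chi> (a, \<one>\<^bsub>N\<^esub>) = \<theta> a"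
      using X_set_DirProd_comm[OF M N fin \<chi>] by blast
    with g_ker have "\<theta> g = \<theta> \<one>\<^bsub>M\<^esub>"
      by (simp add: char_kernel_def)
    then show ?thesis
      using \<chi>\<theta> gM oneM oneN by (simp add: char_kernel_def)
  qed
  then show ?thesis
    using DirProd_not_comm_group[OF M N' ncM] gM oneN by (simp add: K_grp_noncomm)
qed

lemma K_grp_DirProd_comm:
  assumes M: "group M" and N: "comm_group N" and fin: "finite (carrier (M \<times>\<times> N))"
    and ncM: "\<not> comm_group M"
  shows "K_grp (M \<times>\<times> N) = K_grp M \<times> {\<one>\<^bsub>N\<^esub>}"
proof
  have N': "group N"
    using N by (rule comm_group.axioms(2))
  show "K_grp (M \<times>\<times> N) \<subseteq> K_grp M \<times> {\<one>\<^bsub>N\<^esub>}"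
    using K_grp_DirProd_subset_snd[OF M N' fin ncM] fst_K_grp_DirProd[OF M N' fin ncM] by force
  show "K_grp M \<times> {\<one>\<^bsub>N\<^esub>} \<subseteq> K_grp (M \<times>\<times> N)"
    using K_grp_times_one_subset_K_grp_DirProd[OF M N fin ncM] by blast
qed

theorem lemma3p2:
  fixes M :: "('a, 'c) monoid_scheme" and N :: "('b, 'd) monoid_scheme"
  assumes "group M" and "group N"
    and "finite (carrier M)" and "finite (carrier N)"
  shows "(\<not> comm_group M \<and> \<not> comm_group N \<longrightarrow>
            K_grp (M \<times>\<times> N) = {\<one>\<^bsub>M \<times>\<times> N\<^esub>}) \<and>
         (\<not> comm_group M \<and> comm_group N \<longrightarrow>
            K_grp (M \<times>\<times> N) = K_grp M \<times> {\<one>\<^bsub>N\<^esub>})"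
proof -
  have fin: "finite (carrier (M \<times>\<times> N))"
    using assms(3,4) by simp
  show ?thesis
    using K_grp_DirProd_noncomm[OF assms(1,2) fin] K_grp_DirProd_comm[OF assms(1) _ fin] by blast
qed

end
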